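(* In the setting described in the context, if $(g\circ h^a)_\sharp\mu=\mu$ for some $g\in\mathcal{G}$ and $a>0$, then $g_\star\nu=\nu$.
   Context: Let $(\mathcal{X},\Sigma)$ be a measurable space, $\Phi^t$ a flow on $\mathcal{X}$ (bijective measurable maps, $\Phi^{t_1}\circ\Phi^{t_2}=\Phi^{t_1+t_2}$, jointly measurable), $f_\sharp$ push-forward, $\mu$ an invariant probability measure ($\Phi^t_\sharp\mu=\mu$ for all $t$). Let $h^a$, $a>0$, be bijective measurable maps and $\mathcal{G}$ a group of bijective measurable maps of $\mathcal{X}$ with $h^{a_1}\circ h^{a_2}=h^{a_1a_2}$, $\Phi^t\circ g=g\circ\Phi^t$, $g\circ h^a=h^a\circ g$, $\Phi^t\circ h^a=h^a\circ\Phi^{t/a}$. $\mathcal{Y}\subset\mathcal{X}$ is a representative set: for every $x$ there is a unique $a=A(x)>0$ with $h^a(x)\in\mathcal{Y}$, $A$ measurable with $\int A\,d\mu<\infty$; $P(x)=h^{A(x)}(x)$. Standing assumption: $\int A\circ g\,d\mu<\infty$ for every $g\in\mathcal{G}$. For a measure $\rho$ and positive measurable $B$ with $0<\int B\,d\rho<\infty$, $\rho_B$ is the probability measure with $d\rho_B/d\rho=B/\int B\,d\rho$. $\nu=P_\sharp\mu_A$, and for $g\in\mathcal{G}$, $g_\star\nu=P_\sharp\big((g_\sharp\mu)_A\big)$ is the normalized measure associated with $g_\sharp\mu$ (equivalently $g_\star\nu=(P\circ g)_\sharp\nu_{A\circ g}$). *)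

theory Defs
  imports "HOL-Probability.Probability"
begin

definition normalized_density :: "'a measure \<Rightarrow> ('a \<Rightarrow> real) \<Rightarrow> 'a measure" where
  "normalized_density \<rho> B = density \<rho> (\<lambda>x. ennreal (B x / (\<integral>y. B y \<partial>\<rho>)))"

end

theory Submission
  imports Defs
begin

text \<open>Since \<open>g\<close> commutes with \<open>h\<^sup>a\<close>, the hypothesis says that \<open>h\<^sup>a\<close> pushes \<open>g\<^sub>\<sharp>\<mu>\<close> forward to \<open>\<mu>\<close>.
  So it suffices that the normalized measure \<open>P\<^sub>\<sharp>\<rho>\<^sub>A\<close> does not change when \<open>\<rho>\<close> is replaced by
  \<open>h\<^sup>b\<^sub>\<sharp>\<rho>\<close>. This holds because \<open>A \<circ> h\<^sup>b = A / b\<close> and \<open>P \<circ> h\<^sup>b = P\<close>: the constant factor \<open>1/b\<close>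
  disappears in the normalization, and \<open>P\<close> does not see \<open>h\<^sup>b\<close>.\<close>

lemma normalized_density_divide_const:
  fixes B :: "'a \<Rightarrow> real"
  assumes "c \<noteq> 0"
  shows "normalized_density \<rho> (\<lambda>x. B x / c) = normalized_density \<rho> B"
  unfolding normalized_density_def using assms
  by (cases "(\<integral>y. B y \<partial>\<rho>) = 0") (simp_all add: field_simps)

lemma normalized_density_distr:
  fixes B :: "'b \<Rightarrow> real"
  assumes T: "T \<in> \<rho> \<rightarrow>\<^sub>M N" and B: "B \<in> borel_measurable N"
  shows "normalized_density (distr \<rho> N T) B = distr (normalized_density \<rho> (B \<circ> T)) N T"
  unfolding normalized_density_def integral_distr[OF T B] comp_def
  by (rule density_distr[OF _ T]) (use B in measurable)

lemma normalized_density_cong: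
  fixes B B' :: "'a \<Rightarrow> real"
  assumes B: "B \<in> borel_measurable \<rho>" and B': "B' \<in> borel_measurable \<rho>"
    and eq: "\<And>x. x \<in> space \<rho> \<Longrightarrow> B x = B' x"
  shows "normalized_density \<rho> B = normalized_density \<rho> B'"
proof -
  have "(\<integral>y. B y \<partial>\<rho>) = (\<integral>y. B' y \<partial>\<rho>)"
    using eq by (rule Bochner_Integration.integral_cong[OF refl])
  then show ?thesis
    unfolding normalized_density_def using B B' eq by (intro density_cong AE_I2) simp_all
qed

locale representative_set =
  fixes M :: "'a measure" and h :: "real \<Rightarrow> 'a \<Rightarrow> 'a" and Y :: "'a set" and A :: "'a \<Rightarrow> real"
  assumes h_meas: "\<And>b. b > 0 \<Longrightarrow> h b \<in> M \<rightarrow>\<^sub>M M"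
    and h_mult: "\<And>a1 a2 x. a1 > 0 \<Longrightarrow> a2 > 0 \<Longrightarrow> x \<in> space M \<Longrightarrow>
                   h a1 (h a2 x) = h (a1 * a2) x"
    and A_pos: "\<And>x. x \<in> space M \<Longrightarrow> A x > 0"
    and A_rep: "\<And>x. x \<in> space M \<Longrightarrow> h (A x) x \<in> Y"
    and A_unique: "\<And>x b. x \<in> space M \<Longrightarrow> b > 0 \<Longrightarrow> h b x \<in> Y \<Longrightarrow> b = A x"
    and A_meas: "A \<in> borel_measurable M"
begin

lemma h_in_space: "b > 0 \<Longrightarrow> x \<in> space M \<Longrightarrow> h b x \<in> space M"
  by (rule measurable_space[OF h_meas])

lemma h_rescale: "b > 0 \<Longrightarrow> x \<in> space M \<Longrightarrow> h (A x / b) (h b x) = h (A x) x"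
  using h_mult[of "A x / b" b x] A_pos[of x] by simp

lemma A_h_scale:
  assumes b: "b > 0" and x: "x \<in> space M"
  shows "A (h b x) = A x / b"
proof -
  have "h (A x / b) (h b x) \<in> Y"
    using h_rescale[OF b x] A_rep[OF x] by simp
  moreover have "A x / b > 0"
    using A_pos[OF x] b by simp
  ultimately show ?thesis
    using A_unique[OF h_in_space[OF b x]] by simp
qed

lemma projection_h_invariant: "b > 0 \<Longrightarrow> x \<in> space M \<Longrightarrow> h (A (h b x)) (h b x) = h (A x) x"
  by (simp add: A_h_scale h_rescale)

lemma normalized_projection_distr_h:
  assumes sets_\<rho>: "sets \<rho> = sets M"
    and P_def: "\<And>x. P x = h (A x) x" and P_meas: "P \<in> M \<rightarrow>\<^sub>M M"
    and b: "b > 0"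
  shows "distr (normalized_density (distr \<rho> M (h b)) A) M P = distr (normalized_density \<rho> A) M P"
proof -
  have space_\<rho>: "space \<rho> = space M"
    using sets_\<rho> by (rule sets_eq_imp_space_eq)
  have h_meas_\<rho>: "h b \<in> \<rho> \<rightarrow>\<^sub>M M"
    using h_meas[OF b] by (simp add: measurable_cong_sets[OF sets_\<rho> refl])
  have "normalized_density \<rho> (A \<circ> h b) = normalized_density \<rho> (\<lambda>x. A x / b)"
    using h_meas_\<rho> A_meas
    by (intro normalized_density_cong) (simp_all add: A_h_scale b space_\<rho> measurable_cong_sets[OF sets_\<rho> refl])
  also have "\<dots> = normalized_density \<rho> A"
    using b by (simp add: normalized_density_divide_const)
  finally have "normalized_density (distr \<rho> M (h b)) A = distr (normalized_density \<rho> A) M (h b)"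
    using normalized_density_distr[OF h_meas_\<rho> A_meas] by simp
  also have "distr \<dots> M P = distr (normalized_density \<rho> A) M (P \<circ> h b)"
    using h_meas_\<rho> P_meas by (simp add: distr_distr normalized_density_def)
  also have "\<dots> = distr (normalized_density \<rho> A) M P"
    by (rule distr_cong) (simp_all add: normalized_density_def space_\<rho> P_def projection_h_invariant b)
  finally show ?thesis .
qed

end

theorem corollary2:
  fixes M :: "'a measure"
    and \<Phi> :: "real \<Rightarrow> 'a \<Rightarrow> 'a"
    and \<mu> :: "'a measure"
    and h :: "real \<Rightarrow> 'a \<Rightarrow> 'a"
    and G :: "('a \<Rightarrow> 'a) set"
    and Y :: "'a set"
    and A :: "'a \<Rightarrow> real"
    and P :: "'a \<Rightarrow> 'a"
    and g :: "'a \<Rightarrow> 'a"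
    and a :: real
  assumes flow_bij: "\<And>t. bij_betw (\<Phi> t) (space M) (space M)"
    and flow_meas: "\<And>t. \<Phi> t \<in> M \<rightarrow>\<^sub>M M"
    and flow_group: "\<And>t1 t2 x. x \<in> space M \<Longrightarrow> \<Phi> t1 (\<Phi> t2 x) = \<Phi> (t1 + t2) x"
    and flow_joint: "(\<lambda>(t, x). \<Phi> t x) \<in> (borel :: real measure) \<Otimes>\<^sub>M M \<rightarrow>\<^sub>M M"
    and mu_prob: "prob_space \<mu>"
    and mu_sets: "sets \<mu> = sets M"
    and mu_inv: "\<And>t. distr \<mu> M (\<Phi> t) = \<mu>"
    and h_bij: "\<And>b. b > 0 \<Longrightarrow> bij_betw (h b) (space M) (space M)"
    and h_meas: "\<And>b. b > 0 \<Longrightarrow> h b \<in> M \<rightarrow>\<^sub>M M"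
    and h_mult: "\<And>a1 a2 x. a1 > 0 \<Longrightarrow> a2 > 0 \<Longrightarrow> x \<in> space M \<Longrightarrow>
                   h a1 (h a2 x) = h (a1 * a2) x"
    and G_bij: "\<And>f. f \<in> G \<Longrightarrow> bij_betw f (space M) (space M)"
    and G_meas: "\<And>f. f \<in> G \<Longrightarrow> f \<in> M \<rightarrow>\<^sub>M M"
    and G_id: "id \<in> G"
    and G_comp: "\<And>f1 f2. f1 \<in> G \<Longrightarrow> f2 \<in> G \<Longrightarrow> f1 \<circ> f2 \<in> G"
    and G_inv: "\<And>f. f \<in> G \<Longrightarrow> \<exists>f'\<in>G. \<forall>x\<in>space M. f' (f x) = x \<and> f (f' x) = x"
    and G_flow: "\<And>f t x. f \<in> G \<Longrightarrow> x \<in> space M \<Longrightarrow> \<Phi> t (f x) = f (\<Phi> t x)"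
    and G_h: "\<And>f b x. f \<in> G \<Longrightarrow> b > 0 \<Longrightarrow> x \<in> space M \<Longrightarrow> f (h b x) = h b (f x)"
    and flow_h: "\<And>t b x. b > 0 \<Longrightarrow> x \<in> space M \<Longrightarrow> \<Phi> t (h b x) = h b (\<Phi> (t / b) x)"
    and Y_sub: "Y \<subseteq> space M"
    and A_pos: "\<And>x. x \<in> space M \<Longrightarrow> A x > 0"
    and A_rep: "\<And>x. x \<in> space M \<Longrightarrow> h (A x) x \<in> Y"
    and A_unique: "\<And>x b. x \<in> space M \<Longrightarrow> b > 0 \<Longrightarrow> h b x \<in> Y \<Longrightarrow> b = A x"
    and A_meas: "A \<in> borel_measurable M"
    and A_int: "integrable \<mu> A"
    and P_def: "\<And>x. P x = h (A x) x"
    and P_meas: "P \<in> M \<rightarrow>\<^sub>M M"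
    and standing: "\<And>f. f \<in> G \<Longrightarrow> integrable \<mu> (A \<circ> f)"
    and g_in: "g \<in> G"
    and a_pos: "a > 0"
    and hyp: "distr \<mu> M (g \<circ> h a) = \<mu>"
  shows "distr (normalized_density (distr \<mu> M g) A) M P
           = distr (normalized_density \<mu> A) M P"
proof -
  interpret representative_set M h Y A
    using h_meas h_mult A_pos A_rep A_unique A_meas by unfold_locales
  have g_meas_\<mu>: "g \<in> \<mu> \<rightarrow>\<^sub>M M"
    using G_meas[OF g_in] by (simp add: measurable_cong_sets[OF mu_sets refl])
  have "distr (distr \<mu> M g) M (h a) = distr \<mu> M (h a \<circ> g)"
    using h_meas[OF a_pos] g_meas_\<mu> by (rule distr_distr)
  also have "\<dots> = distr \<mu> M (g \<circ> h a)"
    by (rule distr_cong) (simp_all add: G_h[OF g_in a_pos] sets_eq_imp_space_eq[OF mu_sets])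
  finally have "distr (distr \<mu> M g) M (h a) = \<mu>"
    using hyp by simp
  then show ?thesis
    using normalized_projection_distr_h[of "distr \<mu> M g" P a] P_def P_meas a_pos by simp
qed

end
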